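(* Let $X$ be a compact $T_1$ topological space. Then every contractive iterated function system on $X$ has a unique attractor, i.e. its induced Hutchinson operator $F:2^X\to 2^X$ has a unique fixed point.
   Context: An iterated function system (IFS) on $X$ is a finite family $\mathcal{F}=\{f_1,\dots,f_m\}$ of closed mappings $X\to X$ (mappings sending closed sets to closed sets; continuity not assumed). It is contractive if for every open cover $\mathcal{U}$ of $X$ there is $n\in\mathbb{N}$ such that for every sequence $(i_1,\dots,i_n)\in\{1,\dots,m\}^n$ the set $f_{i_1}\circ\cdots\circ f_{i_n}[X]$ is contained in some element of $\mathcal{U}$. $2^X$ denotes the family of nonempty closed subsets of $X$, the Hutchinson operator is $F(K)=\bigcup_{i=1}^m f_i[K]$, and an attractor is a fixed point $K\in 2^X$ of $F$. *)

theory Defs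
  imports "HOL-Analysis.Analysis"
begin

definition word_comp :: "('i \<Rightarrow> 'a \<Rightarrow> 'a) \<Rightarrow> 'i list \<Rightarrow> 'a \<Rightarrow> 'a" where
  "word_comp f ws = foldr (\<lambda>i g. f i \<circ> g) ws id"

definition is_IFS :: "'a topology \<Rightarrow> 'i set \<Rightarrow> ('i \<Rightarrow> 'a \<Rightarrow> 'a) \<Rightarrow> bool" where
  "is_IFS X I f \<longleftrightarrow> finite I \<and> I \<noteq> {} \<and>
     (\<forall>i\<in>I. f i ` topspace X \<subseteq> topspace X \<and> closed_map X X (f i))"

definition contractive_IFS :: "'a topology \<Rightarrow> 'i set \<Rightarrow> ('i \<Rightarrow> 'a \<Rightarrow> 'a) \<Rightarrow> bool" where
  "contractive_IFS X I f \<longleftrightarrow>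
     (\<forall>\<U>. (\<forall>U\<in>\<U>. openin X U) \<and> topspace X \<subseteq> \<Union>\<U> \<longrightarrow>
        (\<exists>n::nat. \<forall>ws. set ws \<subseteq> I \<and> length ws = n \<longrightarrow>
            (\<exists>U\<in>\<U>. word_comp f ws ` topspace X \<subseteq> U)))"

definition hutchinson :: "'i set \<Rightarrow> ('i \<Rightarrow> 'a \<Rightarrow> 'a) \<Rightarrow> 'a set \<Rightarrow> 'a set" where
  "hutchinson I f K = (\<Union>i\<in>I. f i ` K)"

definition attractor :: "'a topology \<Rightarrow> 'i set \<Rightarrow> ('i \<Rightarrow> 'a \<Rightarrow> 'a) \<Rightarrow> 'a set \<Rightarrow> bool" where
  "attractor X I f K \<longleftrightarrow> closedin X K \<and> K \<noteq> {} \<and> hutchinson I f K = K"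

end

theory Submission
  imports Defs
begin

text \<open>The attractor is the intersection K of the iterates F^n(X), which is nonempty by
  compactness.  Contractivity yields the key fact: every nonempty closed A with F(A) \<subseteq> A
  contains K.  Indeed, for x \<notin> A the open cover {X - A, X - {x}} (open by T1) gives a length n
  such that no image f_w[X] of a word w of length n meets both A and x; but some such image
  contains x, and every such image meets A, since f_w[A] \<subseteq> A.  Applied to A = F(K) this gives
  F(K) = K, and applied to an attractor A, which lies in every F^n(X), it gives A = K.\<close>

lemma word_comp_Cons: "word_comp f (i # ws) = f i \<circ> word_comp f ws"
  by (simp add: word_comp_def)

lemma funpow_le_of_le:
  assumes "mono g" "g A \<le> A"
  shows "(g ^^ n) A \<le> A"
proof (induction n)
  case (Suc n)
  then have "g ((g ^^ n) A) \<le> g A" using \<open>mono g\<close> by (simp add: monoD)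
  then show ?case using assms(2) by simp
qed simp

lemma decseq_funpow:
  assumes "mono g" "g A \<le> A"
  shows "decseq (\<lambda>n. (g ^^ n) A)"
proof (rule decseq_SucI)
  fix n
  have "(g ^^ Suc n) A = (g ^^ n) (g A)" by (simp add: funpow_swap1)
  also have "\<dots> \<le> (g ^^ n) A" using assms by (simp add: funpow_mono)
  finally show "(g ^^ Suc n) A \<le> (g ^^ n) A" .
qed

lemma funpow_fixpoint: "g A = A \<Longrightarrow> (g ^^ n) A = A"
  by (induction n) auto

lemma mono_hutchinson: "mono (hutchinson I f)"
  by (auto simp: mono_def hutchinson_def)

lemma hutchinson_funpow_eq_word_images:
  "(hutchinson I f ^^ n) S = (\<Union>ws\<in>{ws. set ws \<subseteq> I \<and> length ws = n}. word_comp f ws ` S)"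
proof (induction n)
  case 0
  show ?case by (simp add: word_comp_def)
next
  case (Suc n)
  have "(hutchinson I f ^^ Suc n) S =
        (\<Union>i\<in>I. \<Union>ws\<in>{ws. set ws \<subseteq> I \<and> length ws = n}. word_comp f (i # ws) ` S)"
    by (simp add: Suc hutchinson_def word_comp_Cons image_UN image_comp)
  also have "\<dots> = (\<Union>ws\<in>{ws. set ws \<subseteq> I \<and> length ws = Suc n}. word_comp f ws ` S)"
    unfolding length_Suc_conv by (auto intro!: UN_I[where a = "_ # _"]) blast
  finally show ?case .
qed

lemma closedin_hutchinson:
  assumes "is_IFS X I f" "closedin X A"
  shows "closedin X (hutchinson I f A)"
  unfolding hutchinson_def
  using assms by (intro closedin_Union) (auto simp: is_IFS_def closed_map_def)

lemma hutchinson_subset_topspace: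
  assumes "is_IFS X I f" "A \<subseteq> topspace X"
  shows "hutchinson I f A \<subseteq> topspace X"
  using assms by (fastforce simp: is_IFS_def hutchinson_def)

lemma hutchinson_eq_empty_iff:
  assumes "is_IFS X I f"
  shows "hutchinson I f A = {} \<longleftrightarrow> A = {}"
  using assms by (auto simp: is_IFS_def hutchinson_def)

definition hutchinson_core :: "'a topology \<Rightarrow> 'i set \<Rightarrow> ('i \<Rightarrow> 'a \<Rightarrow> 'a) \<Rightarrow> 'a set" where
  "hutchinson_core X I f = (\<Inter>n. (hutchinson I f ^^ n) (topspace X))"

lemma hutchinson_core_subset_invariant:
  assumes "t1_space X" "contractive_IFS X I f"
    and A: "closedin X A" "A \<noteq> {}" "hutchinson I f A \<subseteq> A"
  shows "hutchinson_core X I f \<subseteq> A"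
proof
  fix x assume x: "x \<in> hutchinson_core X I f"
  show "x \<in> A"
  proof (rule ccontr)
    assume "x \<notin> A"
    have x_iterate: "x \<in> (hutchinson I f ^^ m) (topspace X)" for m
      using x by (simp add: hutchinson_core_def)
    then have "x \<in> topspace X"
      using funpow_0 by metis
    let ?\<U> = "{topspace X - A, topspace X - {x}}"
    have "(\<forall>U\<in>?\<U>. openin X U) \<and> topspace X \<subseteq> \<Union>?\<U>"
      using A \<open>x \<notin> A\<close> \<open>x \<in> topspace X\<close> \<open>t1_space X\<close> closedin_t1_singleton
      by (auto intro!: openin_diff)
    then obtain n where n: "\<And>ws. set ws \<subseteq> I \<Longrightarrow> length ws = n \<Longrightarrow>
        \<exists>U\<in>?\<U>. word_comp f ws ` topspace X \<subseteq> U"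
      using \<open>contractive_IFS X I f\<close> unfolding contractive_IFS_def by meson
    obtain ws where ws: "set ws \<subseteq> I" "length ws = n" "x \<in> word_comp f ws ` topspace X"
      using x_iterate[of n] by (auto simp: hutchinson_funpow_eq_word_images)
    obtain a where "a \<in> A" using A by auto
    have "word_comp f ws a \<in> (hutchinson I f ^^ n) A"
      using ws \<open>a \<in> A\<close> by (auto simp: hutchinson_funpow_eq_word_images)
    then have "word_comp f ws a \<in> A"
      using funpow_le_of_le[OF mono_hutchinson A(3)] by blast
    moreover have "a \<in> topspace X" using \<open>a \<in> A\<close> A closedin_subset by blast
    ultimately show False using n[OF ws(1,2)] ws(3) by auto
  qed
qed

lemma closedin_hutchinson_funpow_topspace:
  assumes "is_IFS X I f"
  shows "closedin X ((hutchinson I f ^^ n) (topspace X))"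
  by (induction n) (auto intro: closedin_hutchinson[OF assms])

lemma closedin_hutchinson_core: "is_IFS X I f \<Longrightarrow> closedin X (hutchinson_core X I f)"
  unfolding hutchinson_core_def by (intro closedin_Inter) (auto intro: closedin_hutchinson_funpow_topspace)

lemma decseq_hutchinson_funpow_topspace:
  "is_IFS X I f \<Longrightarrow> decseq (\<lambda>n. (hutchinson I f ^^ n) (topspace X))"
  by (intro decseq_funpow mono_hutchinson hutchinson_subset_topspace) auto

lemma hutchinson_core_nonempty:
  assumes "compact_space X" "topspace X \<noteq> {}" "is_IFS X I f"
  shows "hutchinson_core X I f \<noteq> {}"
proof -
  have "(hutchinson I f ^^ n) (topspace X) \<noteq> {}" for n
    using assms(2,3) by (induction n) (auto simp: hutchinson_eq_empty_iff)
  then show ?thesis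
    unfolding hutchinson_core_def
    by (intro compact_space_imp_nest[OF assms(1)] closedin_hutchinson_funpow_topspace
        decseq_hutchinson_funpow_topspace assms(3))
qed

lemma hutchinson_core_invariant:
  assumes "is_IFS X I f"
  shows "hutchinson I f (hutchinson_core X I f) \<subseteq> hutchinson_core X I f"
proof -
  have "hutchinson I f (hutchinson_core X I f) \<subseteq> (hutchinson I f ^^ n) (topspace X)" for n
  proof -
    have "hutchinson I f (hutchinson_core X I f) \<subseteq> hutchinson I f ((hutchinson I f ^^ n) (topspace X))"
      by (rule monoD[OF mono_hutchinson]) (auto simp: hutchinson_core_def)
    also have "\<dots> \<subseteq> (hutchinson I f ^^ n) (topspace X)"
      using decseq_hutchinson_funpow_topspace[OF assms] by (simp add: decseq_Suc_iff)
    finally show ?thesis .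
  qed
  then show ?thesis
    unfolding hutchinson_core_def by blast
qed

lemma attractor_hutchinson_core:
  assumes "compact_space X" "t1_space X" "topspace X \<noteq> {}"
    and ifs: "is_IFS X I f" and "contractive_IFS X I f"
  shows "attractor X I f (hutchinson_core X I f)"
proof -
  let ?K = "hutchinson_core X I f"
  have "closedin X ?K" "?K \<noteq> {}"
    using assms by (auto simp: closedin_hutchinson_core hutchinson_core_nonempty)
  moreover have "hutchinson I f ?K \<subseteq> ?K"
    using ifs by (rule hutchinson_core_invariant)
  moreover have "?K \<subseteq> hutchinson I f ?K"
    using assms \<open>closedin X ?K\<close> \<open>?K \<noteq> {}\<close> \<open>hutchinson I f ?K \<subseteq> ?K\<close>
    by (intro hutchinson_core_subset_invariant closedin_hutchinson monoD[OF mono_hutchinson])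
       (auto simp: hutchinson_eq_empty_iff)
  ultimately show ?thesis
    by (auto simp: attractor_def)
qed

lemma attractor_eq_hutchinson_core:
  assumes "t1_space X" "is_IFS X I f" "contractive_IFS X I f" "attractor X I f A"
  shows "A = hutchinson_core X I f"
proof
  have A: "closedin X A" "A \<noteq> {}" "hutchinson I f A = A"
    using assms(4) by (auto simp: attractor_def)
  have "A \<subseteq> (hutchinson I f ^^ n) (topspace X)" for n
  proof -
    have "A = (hutchinson I f ^^ n) A"
      using A(3) by (simp add: funpow_fixpoint)
    also have "\<dots> \<subseteq> (hutchinson I f ^^ n) (topspace X)"
      using A(1) by (intro funpow_mono mono_hutchinson closedin_subset)
    finally show ?thesis .
  qed
  then show "A \<subseteq> hutchinson_core X I f"
    by (auto simp: hutchinson_core_def)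
  show "hutchinson_core X I f \<subseteq> A"
    using assms(1,3) A by (intro hutchinson_core_subset_invariant) auto
qed

theorem theorem25:
  fixes X :: "'a topology" and I :: "'i set" and f :: "'i \<Rightarrow> 'a \<Rightarrow> 'a"
  assumes "compact_space X" and "t1_space X" and "topspace X \<noteq> {}"
    and "is_IFS X I f" and "contractive_IFS X I f"
  shows "\<exists>!K. attractor X I f K"
  using attractor_hutchinson_core[OF assms] attractor_eq_hutchinson_core[OF assms(2,4,5)]
  by blast

end
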